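(* Let $C$ be any logistic circuit structure over Boolean variables $X_1,\dots,X_k$, with parameter vector $\theta\in\mathbb{R}^m$ collecting its $m$ OR-gate wire parameters. Then there exists a feature map $\phi:[0,1]^k\to\mathbb{R}^{m'}$ depending only on the input $\mathbf{x}$ and the structure of $C$ (not on the parameters), and a linear correspondence by which the logistic circuit is a logistic regression model over these features: for every parameter setting, $\Pr(Y=1\mid\mathbf{x}) = 1/(1+\exp(-\phi(\mathbf{x})\cdot\theta'))$ for all $\mathbf{x}\in[0,1]^k$, where $\theta'$ is a vector whose entries are parameters of the circuit. That is, any logistic circuit model can be reduced to a logistic regression model over a particular feature set.
   Context: A logical circuit over Boolean variables $X_1,\dots,X_k$ is a rooted directed acyclic graph whose leaves are literals $X_i$ or $\neg X_i$ and whose inner nodes are AND gates or OR gates; each node represents a logical sentence. An AND gate is decomposable if its inputs mention pairwise disjoint sets of variables; an OR gate is deterministic if for every complete assignment at most one of its inputs is satisfied. A logistic circuit is a logical circuit whose root is an OR gate, with all AND gates decomposable and all OR gates deterministic, together with a real parameter on each input wire of each OR gate. For $\mathbf{x}\in[0,1]^k$, $\Pr_{\mathbf{x}}$ is the fully factorized distribution with $\Pr_{\mathbf{x}}(X_i=1)=x_i$, and $\Pr_{\mathbf{x}}(n)$ is the probability of the sentence of node $n$. For an OR gate $n$ with child $c$, the flow is $f(n,\mathbf{x},c)=\Pr_{\mathbf{x}}(c)/\Pr_{\mathbf{x}}(n)$ (taken to be $0$ if $\Pr_{\mathbf{x}}(n)=0$). The weight function: $g_n(\mathbf{x})=0$ for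 a leaf; $g_n(\mathbf{x})=\sum_i g_{c_i}(\mathbf{x})$ for an AND gate with children $c_i$; $g_n(\mathbf{x})=\sum_i f(n,\mathbf{x},c_i)(g_{c_i}(\mathbf{x})+\theta_i)$ for an OR gate with inputs $(c_i,\theta_i)$. With root $r$, $\Pr(Y=1\mid\mathbf{x})=1/(1+\exp(-g_r(\mathbf{x})))$. *)

theory Defs
  imports Complex_Main
begin

text \<open>A logical circuit is encoded as a DAG on nodes numbered by naturals: every
  node n is labelled by a gate, and every child of n has a smaller number
  (a topological numbering; every finite DAG admits one).  An OR gate lists its
  inputs as pairs (child, wire index j); the parameter of that wire is theta j.
  Variables X_1..X_k are the indices 1..k.\<close>

datatype gate =
    Lit nat bool              \<comment> \<open>Lit i True is X_i, Lit i False is the negation of X_i\<close>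
  | AndG "nat list"
  | OrG "(nat \<times> nat) list"

type_synonym circuit = "nat \<Rightarrow> gate"

definition children :: "gate \<Rightarrow> nat list" where
  "children g = (case g of Lit _ _ \<Rightarrow> [] | AndG cs \<Rightarrow> cs | OrG cs \<Rightarrow> map fst cs)"

function sat :: "circuit \<Rightarrow> nat \<Rightarrow> (nat \<Rightarrow> bool) \<Rightarrow> bool" where
  "sat C n a = (case C n of
      Lit i b \<Rightarrow> (a i = b)
    | AndG cs \<Rightarrow> (\<forall>c\<in>set cs. c < n \<longrightarrow> sat C c a)
    | OrG cs \<Rightarrow> (\<exists>p\<in>set cs. if fst p < n then sat C (fst p) a else False))"
  by pat_completeness auto
termination by (relation "measure (\<lambda>(C,n,a). n)") auto

function vars :: "circuit \<Rightarrow> nat \<Rightarrow> nat set" where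
  "vars C n = (case C n of
      Lit i b \<Rightarrow> {i}
    | AndG cs \<Rightarrow> (\<Union>c\<in>set cs. if c < n then vars C c else {})
    | OrG cs \<Rightarrow> (\<Union>p\<in>set cs. if fst p < n then vars C (fst p) else {}))"
  by pat_completeness auto
termination by (relation "measure (\<lambda>(C,n). n)") auto

inductive_set nodes :: "circuit \<Rightarrow> nat \<Rightarrow> nat set" for C r where
  root: "r \<in> nodes C r"
| child: "n \<in> nodes C r \<Longrightarrow> c \<in> set (children (C n)) \<Longrightarrow> c \<in> nodes C r"

definition logistic_circuit :: "circuit \<Rightarrow> nat \<Rightarrow> nat \<Rightarrow> nat \<Rightarrow> bool" where
  "logistic_circuit C k m r \<longleftrightarrow>
     (\<exists>cs. C r = OrG cs) \<and>
     (\<forall>n\<in>nodes C r.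
        (\<forall>c\<in>set (children (C n)). c < n) \<and>
        (\<forall>i b. C n = Lit i b \<longrightarrow> i \<in> {1..k}) \<and>
        (\<forall>cs. C n = AndG cs \<longrightarrow>
           (\<forall>i<length cs. \<forall>j<length cs. i \<noteq> j \<longrightarrow> vars C (cs!i) \<inter> vars C (cs!j) = {})) \<and>
        (\<forall>cs. C n = OrG cs \<longrightarrow>
           (\<forall>p\<in>set cs. snd p < m) \<and>
           (\<forall>S\<subseteq>{1..k}. \<forall>i<length cs. \<forall>j<length cs. i \<noteq> j \<longrightarrow>
              \<not> (sat C (fst (cs!i)) (\<lambda>v. v \<in> S) \<and> sat C (fst (cs!j)) (\<lambda>v. v \<in> S)))))"

text \<open>Probability of the sentence of node n under the fully factorized
  distribution with Pr(X_i = 1) = x i; complete assignments are subsets S of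
  {1..k} (the variables set to true).\<close>
definition prob :: "circuit \<Rightarrow> nat \<Rightarrow> (nat \<Rightarrow> real) \<Rightarrow> nat \<Rightarrow> real" where
  "prob C k x n = (\<Sum>S\<in>Pow {1..k}.
      (if sat C n (\<lambda>v. v \<in> S) then (\<Prod>i\<in>S. x i) * (\<Prod>i\<in>{1..k} - S. 1 - x i) else 0))"

definition flow :: "circuit \<Rightarrow> nat \<Rightarrow> (nat \<Rightarrow> real) \<Rightarrow> nat \<Rightarrow> nat \<Rightarrow> real" where
  "flow C k x n c = (if prob C k x n = 0 then 0 else prob C k x c / prob C k x n)"

function weight :: "circuit \<Rightarrow> nat \<Rightarrow> (nat \<Rightarrow> real) \<Rightarrow> (nat \<Rightarrow> real) \<Rightarrow> nat \<Rightarrow> real" where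
  "weight C k \<theta> x n = (case C n of
      Lit i b \<Rightarrow> 0
    | AndG cs \<Rightarrow> (\<Sum>c\<leftarrow>cs. if c < n then weight C k \<theta> x c else 0)
    | OrG cs \<Rightarrow> (\<Sum>p\<leftarrow>cs. if fst p < n
                 then flow C k x n (fst p) * (weight C k \<theta> x (fst p) + \<theta> (snd p)) else 0))"
  by pat_completeness auto
termination by (relation "measure (\<lambda>(C,k,\<theta>,x,n). n)") auto

definition lc_prob :: "circuit \<Rightarrow> nat \<Rightarrow> (nat \<Rightarrow> real) \<Rightarrow> nat \<Rightarrow> (nat \<Rightarrow> real) \<Rightarrow> real" where
  "lc_prob C k \<theta> r x = 1 / (1 + exp (- weight C k \<theta> x r))"

definition unit_cube :: "nat \<Rightarrow> (nat \<Rightarrow> real) set" where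
  "unit_cube k = {x. \<forall>i\<in>{1..k}. 0 \<le> x i \<and> x i \<le> 1}"

end

theory Submission
  imports Defs
begin

text \<open>The flows f(n, x, c) depend on the input x and on the structure of the circuit,
  but not on the wire parameters, and every gate combines the weights of its children
  and its wire parameters linearly.  Hence the root weight g_r(x) is a linear function
  of the parameter vector: writing e_j for the j-th unit vector, it equals the sum of
  theta_j times the root weight of the circuit with parameters e_j, and those root
  weights are the features of the logistic regression model.\<close>

declare weight.simps [simp del]

lemma sum_list_sum_swap:
  "(\<Sum>x\<leftarrow>xs. \<Sum>i\<in>I. f x i) = (\<Sum>i\<in>I. \<Sum>x\<leftarrow>xs. f x i :: 'a::comm_monoid_add)"
  by (induction xs) (simp_all add: sum.distrib)

lemma weight_linear:
  "weight C k (\<lambda>j. \<Sum>i\<in>I. c i * \<theta> i j) x n = (\<Sum>i\<in>I. c i * weight C k (\<theta> i) x n)"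
proof (induction n rule: less_induct)
  case (less n)
  show ?case
  proof (cases "C n")
    case (Lit v b)
    then show ?thesis by (simp add: weight.simps)
  next
    case (AndG cs)
    have "weight C k (\<lambda>j. \<Sum>i\<in>I. c i * \<theta> i j) x n
        = (\<Sum>d\<leftarrow>cs. \<Sum>i\<in>I. c i * (if d < n then weight C k (\<theta> i) x d else 0))"
      using less.IH
      by (auto simp: weight.simps[of C k _ x n] AndG intro!: arg_cong[where f = sum_list] map_cong)
    also have "\<dots> = (\<Sum>i\<in>I. c i * weight C k (\<theta> i) x n)"
      by (simp add: weight.simps[of C k _ x n] AndG sum_list_sum_swap sum_list_const_mult)
    finally show ?thesis .
  next
    case (OrG cs)
    have "weight C k (\<lambda>j. \<Sum>i\<in>I. c i * \<theta> i j) x n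
        = (\<Sum>p\<leftarrow>cs. \<Sum>i\<in>I. c i * (if fst p < n
             then flow C k x n (fst p) * (weight C k (\<theta> i) x (fst p) + \<theta> i (snd p)) else 0))"
      using less.IH
      by (auto simp: weight.simps[of C k _ x n] OrG sum.distrib sum_distrib_left algebra_simps
               intro!: arg_cong[where f = sum_list] map_cong)
    also have "\<dots> = (\<Sum>i\<in>I. c i * weight C k (\<theta> i) x n)"
      by (simp add: weight.simps[of C k _ x n] OrG sum_list_sum_swap sum_list_const_mult)
    finally show ?thesis .
  qed
qed

lemma weight_cong_wires:
  assumes "\<And>n' cs p. n' \<in> nodes C r \<Longrightarrow> C n' = OrG cs \<Longrightarrow> p \<in> set cs \<Longrightarrow> \<theta> (snd p) = \<theta>' (snd p)"
  shows "n \<in> nodes C r \<Longrightarrow> weight C k \<theta> x n = weight C k \<theta>' x n"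
proof (induction n rule: less_induct)
  case (less n)
  have IH: "d \<in> set (children (C n)) \<Longrightarrow> d < n \<Longrightarrow> weight C k \<theta> x d = weight C k \<theta>' x d" for d
    using less.IH less.prems nodes.child by blast
  show ?case
  proof (cases "C n")
    case (Lit v b)
    then show ?thesis by (simp add: weight.simps)
  next
    case (AndG cs)
    then show ?thesis
      using IH by (auto simp: weight.simps[of C k _ x n] children_def
                        intro!: arg_cong[where f = sum_list] map_cong)
  next
    case (OrG cs)
    then show ?thesis
      using IH assms[OF less.prems OrG] by (force simp: weight.simps[of C k _ x n] children_def
                        intro!: arg_cong[where f = sum_list] map_cong)
  qed
qed

theorem proposition2:
  fixes C :: circuit and k m r :: nat
  assumes "logistic_circuit C k m r"
  shows "\<exists>(m'::nat) (\<phi> :: (nat \<Rightarrow> real) \<Rightarrow> nat \<Rightarrow> real) (\<sigma> :: nat \<Rightarrow> nat).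
           (\<forall>i<m'. \<sigma> i < m) \<and>
           (\<forall>\<theta> :: nat \<Rightarrow> real. \<forall>x\<in>unit_cube k.
              lc_prob C k \<theta> r x = 1 / (1 + exp (- (\<Sum>i<m'. \<phi> x i * \<theta> (\<sigma> i)))))"
proof -
  define e :: "nat \<Rightarrow> nat \<Rightarrow> real" where "e j i = (if i = j then 1 else 0)" for j i
  have wires: "snd p < m" if "n \<in> nodes C r" "C n = OrG cs" "p \<in> set cs" for n cs p
    using assms that unfolding logistic_circuit_def by blast
  have root_weight_linear: "weight C k \<theta> x r = (\<Sum>j<m. weight C k (e j) x r * \<theta> j)" for \<theta> x
  proof -
    have unit_expansion: "\<theta> i = (\<Sum>j<m. \<theta> j * e j i)" if "i < m" for i
      using that by (simp add: e_def if_distrib[of "times _"] cong: if_cong)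
    have "weight C k \<theta> x r = weight C k (\<lambda>i. \<Sum>j<m. \<theta> j * e j i) x r"
      by (rule weight_cong_wires[OF _ nodes.root]) (simp add: unit_expansion wires)
    also have "\<dots> = (\<Sum>j<m. weight C k (e j) x r * \<theta> j)"
      by (simp add: weight_linear mult.commute)
    finally show ?thesis .
  qed
  show ?thesis
  proof (intro exI[of _ m] exI[of _ "\<lambda>x j. weight C k (e j) x r"] exI[of _ id] conjI allI ballI)
    fix \<theta> x
    show "lc_prob C k \<theta> r x = 1 / (1 + exp (- (\<Sum>j<m. weight C k (e j) x r * \<theta> (id j))))"
      unfolding lc_prob_def id_apply by (subst root_weight_linear) (rule refl)
  qed simp
qed

end
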